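(* For any integers $W\ge6$, $L\ge2$, $d\ge1$ and any $0<\delta\le\frac1{3K}$ with $K=\lfloor(WL)^{2/d}\rfloor$, there exists a ReLU network $\phi:\mathbb{R}\to\mathbb{R}$, $\phi\in\mathcal{NN}(4W+3,4L)$, such that $\phi(x)\in[0,1]$ for all $x\in\mathbb{R}$, $\mathrm{Lip}\,\phi\le\frac{2L}{K^2\delta^2}$, and $$\phi(x)=\tfrac kK\quad\text{if }x\in\left[\tfrac kK,\tfrac{k+1}K-\delta\cdot1_{\{k<K-1\}}\right],\ k=0,1,\dots,K-1.$$
   Context: $\sigma(x)=\max(x,0)$. $\mathcal{NN}(W,L)$: functions $\phi(x)=T_L(\sigma(T_{L-1}(\cdots\sigma(T_0(x))\cdots)))$ with affine maps $T_l$, ReLU applied componentwise, all hidden layer sizes $\le W$ and depth $\le L$. $\mathrm{Lip}\,\phi$ is the Lipschitz constant of $\phi$. *)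

theory Defs
  imports "HOL-Analysis.Analysis"
begin

text \<open>Vectors of dimension n are represented as functions nat => real (only indices < n matter).
  An affine map from dimension n to dimension m is given by a matrix A and a bias b.\<close>

definition affine_map :: "nat \<Rightarrow> nat \<Rightarrow> (nat \<Rightarrow> nat \<Rightarrow> real) \<Rightarrow> (nat \<Rightarrow> real)
    \<Rightarrow> (nat \<Rightarrow> real) \<Rightarrow> (nat \<Rightarrow> real)" where
  "affine_map n m A b x = (\<lambda>i. if i < m then (\<Sum>j<n. A i j * x j) + b i else 0)"

definition relu_vec :: "(nat \<Rightarrow> real) \<Rightarrow> (nat \<Rightarrow> real)" where
  "relu_vec x = (\<lambda>i. max (x i) 0)"

text \<open>Realization: dims = [d_0, d_1, ..., d_{L+1}], layers = [T_0, ..., T_L];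
  phi = T_L o sigma o T_{L-1} o ... o sigma o T_0.\<close>
fun net_eval :: "nat list \<Rightarrow> ((nat \<Rightarrow> nat \<Rightarrow> real) \<times> (nat \<Rightarrow> real)) list
    \<Rightarrow> (nat \<Rightarrow> real) \<Rightarrow> (nat \<Rightarrow> real)" where
  "net_eval (n # m # ds) ((A, b) # Ls) x =
     (if ds = [] then affine_map n m A b x
      else net_eval (m # ds) Ls (relu_vec (affine_map n m A b x)))"
| "net_eval _ _ x = x"

text \<open>NN(W,L) for scalar functions R -> R: all hidden layer sizes \<le> W, depth (number of
  hidden layers) \<le> L.\<close>
definition NN_scalar :: "nat \<Rightarrow> nat \<Rightarrow> (real \<Rightarrow> real) \<Rightarrow> bool" where
  "NN_scalar W L \<phi> \<longleftrightarrow>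
     (\<exists>dims layers.
        length layers \<ge> 1 \<and> length dims = length layers + 1 \<and>
        hd dims = 1 \<and> last dims = 1 \<and>
        length layers - 1 \<le> L \<and>
        (\<forall>i. 0 < i \<and> i < length layers \<longrightarrow> dims ! i \<le> W) \<and>
        (\<forall>t. \<phi> t = net_eval dims layers (\<lambda>i. if i = 0 then t else 0) 0))"

definition K_of :: "nat \<Rightarrow> nat \<Rightarrow> nat \<Rightarrow> nat" where
  "K_of W L d = nat \<lfloor>(real (W * L)) powr (2 / real d)\<rfloor>"

end

theory Submission
  imports Defs
begin

text \<open>
  Write \<open>K = A * B\<close> with \<open>A, B \<le> W * L\<close> (\<open>A = B = W * L\<close> if \<open>d = 1\<close>, \<open>A = 1\<close> otherwise) and cut
  \<open>[0, 1]\<close> into \<open>A\<close> blocks of length \<open>B / K\<close>, each made of \<open>B\<close> cells of length \<open>1 / K\<close>.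
  The function \<open>psi\<close> rounds \<open>x\<close> down to the left end of its cell using two staircases of
  steep ramps: one with \<open>A - 1\<close> steps counts the blocks left of \<open>x\<close>, which gives the position
  \<open>local_coord x\<close> of \<open>x\<close> inside its block, and one with \<open>B - 1\<close> steps counts the cells inside
  the block. Then \<open>K * local_coord x\<close> minus the cell count is the position of \<open>x\<close> inside its
  cell, clamped to \<open>[0, 1]\<close>, and \<open>psi\<close> subtracts it divided by \<open>K\<close>. While the block count
  is still rising near a block boundary, a bump (the difference of two shifted block
  staircases) forces the clamp to \<open>0\<close>, so that \<open>psi\<close> is the identity there; this keeps \<open>psi\<close>
  \<open>(2 + 4 / (K * \<delta>))\<close>-Lipschitz.

  Only \<open>3 (A - 1) + (B - 1)\<close> ramps are needed rather than \<open>K\<close>. A ReLU network evaluates them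
  sequentially: it carries five nonnegative registers from layer to layer and each layer adds
  \<open>2 W - 1\<close> ramps, each built from two ReLUs, so width \<open>4 W + 3\<close> and depth \<open>4 L\<close> suffice.
\<close>

definition clamp01 :: "real \<Rightarrow> real" where
  "clamp01 z = max 0 (min 1 z)"

lemma clamp01_bounds: "0 \<le> clamp01 z" "clamp01 z \<le> 1"
  by (auto simp: clamp01_def)

lemma clamp01_eq_self: "0 \<le> z \<Longrightarrow> z \<le> 1 \<Longrightarrow> clamp01 z = z"
  by (auto simp: clamp01_def)

lemma clamp01_eq_0: "z \<le> 0 \<Longrightarrow> clamp01 z = 0"
  by (auto simp: clamp01_def)

lemma clamp01_le_self: "0 \<le> z \<Longrightarrow> clamp01 z \<le> z"
  by (auto simp: clamp01_def)

lemma relu_diff_eq_clamp01: "max z 0 - max (z - 1) 0 = clamp01 z"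
  by (auto simp: clamp01_def)

lemma lipschitz_on_clamp01: "1-lipschitz_on S clamp01"
  by (rule lipschitz_onI) (auto simp: clamp01_def dist_real_def)

definition ramp :: "real \<Rightarrow> real \<Rightarrow> real \<Rightarrow> real" where
  "ramp c w u = clamp01 ((u - c) / w + 1)"

lemma ramp_bounds: "0 \<le> ramp c w u" "ramp c w u \<le> 1"
  by (auto simp: ramp_def clamp01_bounds)

lemma ramp_eq_1: "0 < w \<Longrightarrow> c \<le> u \<Longrightarrow> ramp c w u = 1"
  by (auto simp: ramp_def clamp01_def)

lemma ramp_eq_0:
  assumes "0 < w" "u \<le> c - w"
  shows "ramp c w u = 0"
proof -
  have "(u - c) / w \<le> -1" using assms by (simp add: divide_simps)
  then show ?thesis by (simp add: ramp_def clamp01_def)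
qed

lemma ramp_antimono:
  assumes "0 < w" "c' \<le> c"
  shows "ramp c w u \<le> ramp c' w u"
proof -
  have "(u - c) / w \<le> (u - c') / w" using assms by (simp add: divide_right_mono)
  then show ?thesis by (simp add: ramp_def clamp01_def)
qed

lemma lipschitz_on_ramp:
  assumes "0 < w"
  shows "(1/w)-lipschitz_on UNIV (ramp c w)"
proof -
  have "(1/w)-lipschitz_on UNIV (\<lambda>u. (u - c) / w + 1)"
    using assms by (intro lipschitz_onI)
      (auto simp: dist_real_def diff_divide_distrib[symmetric] abs_divide)
  from lipschitz_on_compose2[OF this lipschitz_on_clamp01] show ?thesis
    by (simp add: ramp_def[abs_def])
qed

lemma lipschitz_on_add_split:
  fixes f g :: "real \<Rightarrow> real"
  assumes f: "C-lipschitz_on UNIV f" and g: "C-lipschitz_on UNIV g"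
    and f_const: "\<And>x. m \<le> x \<Longrightarrow> f x = f m" and g_const: "\<And>x. x \<le> m \<Longrightarrow> g x = g m"
  shows "C-lipschitz_on UNIV (\<lambda>x. f x + g x)"
proof (rule lipschitz_on_leI)
  show "0 \<le> C" using lipschitz_on_nonneg[OF f] .
  have F: "\<bar>f a - f b\<bar> \<le> C * \<bar>a - b\<bar>" for a b
    using lipschitz_onD[OF f, of a b] by (simp add: dist_real_def)
  have G: "\<bar>g a - g b\<bar> \<le> C * \<bar>a - b\<bar>" for a b
    using lipschitz_onD[OF g, of a b] by (simp add: dist_real_def)
  fix x y :: real assume "x \<le> y"
  consider "y \<le> m" | "m \<le> x" | "x \<le> m" "m \<le> y" by linarith
  then show "dist (f x + g x) (f y + g y) \<le> C * dist x y"
  proof cases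
    case 1
    then have "g x = g y" using g_const[of x] g_const[of y] \<open>x \<le> y\<close> by simp
    then show ?thesis using F[of x y] by (simp add: dist_real_def)
  next
    case 2
    then have "f x = f y" using f_const[of x] f_const[of y] \<open>x \<le> y\<close> by simp
    then show ?thesis using G[of x y] by (simp add: dist_real_def)
  next
    case 3
    then have "\<bar>(f x + g x) - (f y + g y)\<bar> = \<bar>(f x - f m) + (g m - g y)\<bar>"
      using f_const[of y] g_const[of x] by simp
    also have "\<dots> \<le> \<bar>f x - f m\<bar> + \<bar>g m - g y\<bar>" by (rule abs_triangle_ineq)
    also have "\<dots> \<le> C * \<bar>x - m\<bar> + C * \<bar>m - y\<bar>" using F G by (rule add_mono)
    also have "\<dots> = C * \<bar>x - y\<bar>" using 3 by (simp add: algebra_simps)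
    finally show ?thesis by (simp add: dist_real_def)
  qed
qed

lemma lipschitz_on_interval_concat:
  fixes f :: "real \<Rightarrow> real"
  assumes "C-lipschitz_on {a..b} f" "C-lipschitz_on {b..c} f"
  shows "C-lipschitz_on {a..c} f"
  using lipschitz_on_concat[OF assms] by simp

lemma lipschitz_on_interval_chain:
  fixes f :: "real \<Rightarrow> real" and p :: "nat \<Rightarrow> real"
  assumes "0 \<le> C" and "\<And>i. i < n \<Longrightarrow> C-lipschitz_on {p i .. p (Suc i)} f"
  shows "C-lipschitz_on {p 0 .. p n} f"
  using assms(2)
proof (induction n)
  case 0
  show ?case
    unfolding atLeastAtMost_singleton using \<open>0 \<le> C\<close> by (rule lipschitz_on_singleton)
next
  case (Suc n)
  then have "C-lipschitz_on {p 0 .. p n} f" "C-lipschitz_on {p n .. p (Suc n)} f" by simp_all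
  then show ?case by (rule lipschitz_on_interval_concat)
qed

definition staircase :: "(nat \<Rightarrow> real) \<Rightarrow> real \<Rightarrow> nat \<Rightarrow> real \<Rightarrow> real" where
  "staircase c w n u = (\<Sum>i<n. ramp (c i) w u)"

lemma staircase_nonneg: "0 \<le> staircase c w n u"
  unfolding staircase_def by (intro sum_nonneg) (simp add: ramp_bounds)

lemma staircase_antimono:
  assumes "0 < w" "\<And>i. i < n \<Longrightarrow> c' i \<le> c i"
  shows "staircase c w n u \<le> staircase c' w n u"
  unfolding staircase_def using assms by (intro sum_mono ramp_antimono) auto

lemma staircase_ge_count:
  assumes "0 < w" "J \<le> n" "\<And>j. j < J \<Longrightarrow> c j \<le> x"
  shows "real J \<le> staircase c w n x"
proof -
  have "staircase c w n x = (\<Sum>j<J. ramp (c j) w x) + (\<Sum>j\<in>{J..<n}. ramp (c j) w x)"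
    using assms(2) by (simp add: staircase_def atLeast0LessThan[symmetric] sum.atLeastLessThan_concat)
  moreover have "(\<Sum>j<J. ramp (c j) w x) = real J"
    using assms by (simp add: ramp_eq_1)
  moreover have "0 \<le> (\<Sum>j\<in>{J..<n}. ramp (c j) w x)"
    by (intro sum_nonneg) (simp add: ramp_bounds)
  ultimately show ?thesis by linarith
qed

lemma sum_lessThan_restrict:
  fixes n m :: nat
  assumes "n \<le> m"
  shows "(\<Sum>g<m. if g < n then f g else 0) = (\<Sum>g<n. f g)"
proof -
  have "{..<m} \<inter> {g. g < n} = {..<n}" using assms by auto
  then show ?thesis by (simp add: sum.If_cases)
qed

lemma staircase_eq_count:
  assumes "0 < w" "J \<le> n" "\<And>j. j < J \<Longrightarrow> c j \<le> x"
    and "\<And>j. J \<le> j \<Longrightarrow> j < n \<Longrightarrow> x \<le> c j - w"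
  shows "staircase c w n x = real J"
proof -
  have "staircase c w n x = (\<Sum>j<n. if j < J then 1 else 0)"
    unfolding staircase_def using assms by (intro sum.cong) (auto simp: ramp_eq_1 ramp_eq_0)
  also have "\<dots> = real J" using sum_lessThan_restrict[OF assms(2), of "\<lambda>_. 1::real"] by simp
  finally show ?thesis .
qed

lemma staircase_eq_count_plus_ramp:
  assumes "0 < w" "J < n" "\<And>j. j < J \<Longrightarrow> c j \<le> x"
    and "\<And>j. J < j \<Longrightarrow> j < n \<Longrightarrow> x \<le> c j - w"
  shows "staircase c w n x = real J + ramp (c J) w x"
proof -
  have "staircase c w n x = (\<Sum>j<n. (if j < J then 1 else 0) + (if j = J then ramp (c J) w x else 0))"
    unfolding staircase_def using assms by (intro sum.cong) (auto simp: ramp_eq_1 ramp_eq_0)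
  also have "\<dots> = (\<Sum>j<n. if j < J then 1 else 0) + ramp (c J) w x"
    using assms(2) by (simp add: sum.distrib)
  also have "(\<Sum>j<n. if j < J then 1 else 0) = real J"
    using sum_lessThan_restrict[of J n "\<lambda>_. 1::real"] assms(2) by simp
  finally show ?thesis .
qed

lemma lipschitz_on_staircase:
  assumes "0 < w" and sep: "\<And>i j. i < j \<Longrightarrow> j < n \<Longrightarrow> c i \<le> c j - w"
  shows "(1/w)-lipschitz_on UNIV (staircase c w n)"
  using sep
proof (induction n)
  case 0
  then show ?case using \<open>0 < w\<close> by (auto simp: staircase_def intro: lipschitz_onI)
next
  case (Suc n)
  have "(1/w)-lipschitz_on UNIV (\<lambda>u. staircase c w n u + ramp (c n) w u)"
  proof (rule lipschitz_on_add_split[where m = "c n - w"])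
    show "(1/w)-lipschitz_on UNIV (staircase c w n)" using Suc by simp
    show "(1/w)-lipschitz_on UNIV (ramp (c n) w)" using \<open>0 < w\<close> by (rule lipschitz_on_ramp)
    show "ramp (c n) w x = ramp (c n) w (c n - w)" if "x \<le> c n - w" for x
      using that \<open>0 < w\<close> by (simp add: ramp_eq_0)
    show "staircase c w n x = staircase c w n (c n - w)" if "c n - w \<le> x" for x
    proof -
      have "c i \<le> c n - w" "c i \<le> x" if "i < n" for i
        using Suc.prems that \<open>c n - w \<le> x\<close> by force+
      then show ?thesis
        unfolding staircase_def using \<open>0 < w\<close> by (intro sum.cong) (simp_all add: ramp_eq_1)
    qed
  qed
  then show ?case by (simp add: staircase_def)
qed

section \<open>The two-scale staircase function\<close>

lemma add_mult_less_pred_mult: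
  fixes a i A B :: nat
  assumes "i < B" "a < A" "Suc a < A \<or> Suc i < B"
  shows "a * B + i < A * B - 1"
proof -
  have "Suc (a * B + i) < A * B"
  proof (cases "Suc a < A")
    case True
    have "Suc (a * B + i) \<le> Suc a * B" using assms(1) by simp
    also have "\<dots> < A * B" using mult_less_mono1[OF True, of B] assms(1) by simp
    finally show ?thesis .
  next
    case False
    then have "Suc (a * B + i) < Suc a * B" using assms(3) by simp
    also have "\<dots> \<le> A * B" using assms(2) by (intro mult_le_mono1) simp
    finally show ?thesis .
  qed
  then show ?thesis by simp
qed

locale two_scale_staircase =
  fixes A B :: nat and \<delta> :: real
  assumes A_pos: "1 \<le> A" and B_pos: "1 \<le> B" and \<delta>_pos: "0 < \<delta>"
    and \<delta>_small: "3 * real (A * B) * \<delta> \<le> 1"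
begin

definition K :: real where
  "K = real (A * B)"

definition block :: "nat \<Rightarrow> real" where
  "block a = real a * real B / K"

definition block_stairs :: "real \<Rightarrow> real \<Rightarrow> real" where
  "block_stairs off = staircase (\<lambda>j. block (Suc j) - off) (\<delta>/3) (A - 1)"

definition block_count :: "real \<Rightarrow> real" where
  "block_count = block_stairs (\<delta>/3)"

definition bump :: "real \<Rightarrow> real" where
  "bump x = block_stairs (2*\<delta>/3) x - block_stairs 0 x"

definition cell_count :: "real \<Rightarrow> real" where
  "cell_count = staircase (\<lambda>i. real (Suc i) / K) \<delta> (B - 1)"

definition local_coord :: "real \<Rightarrow> real" where
  "local_coord x = x - real B / K * block_count x"

definition psi :: "real \<Rightarrow> real" where
  "psi x = x - clamp01 (K * local_coord x - cell_count (local_coord x) - bump x) / K"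

lemma K_pos: "0 < K"
  using A_pos B_pos by (simp add: K_def)

lemma three_\<delta>_le_cell: "3 * \<delta> \<le> 1 / K"
  using \<delta>_small K_pos by (simp add: K_def field_simps)

lemma cell_le_block_length: "1 / K \<le> real B / K"
  using B_pos K_pos by (simp add: divide_right_mono)

lemma block_0 [simp]: "block 0 = 0"
  by (simp add: block_def)

lemma block_A: "block A = 1"
  using A_pos B_pos by (simp add: block_def K_def)

lemma block_Suc: "block (Suc a) = block a + real B / K"
  by (simp add: block_def distrib_right add_divide_distrib)

lemma block_mono: "a \<le> b \<Longrightarrow> block a \<le> block b"
  using K_pos by (simp add: block_def divide_right_mono mult_right_mono)

lemma block_gap:
  assumes "a < b"
  shows "block (Suc a) + 3 * \<delta> \<le> block (Suc b)"
  using block_mono[of "Suc (Suc a)" "Suc b"] block_Suc[of "Suc a"] assms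
    three_\<delta>_le_cell cell_le_block_length by simp

lemma block_stairs_in_block:
  assumes a: "a < A" and off: "0 \<le> off" "off \<le> 2*\<delta>/3"
    and x: "block a \<le> x" "Suc a < A \<Longrightarrow> x \<le> block (Suc a) + 2*\<delta>"
  shows "block_stairs off x
    = real a + (if Suc a < A then ramp (block (Suc a) - off) (\<delta>/3) x else 0)"
proof -
  have below: "block (Suc j) - off \<le> x" if "j < a" for j
    using block_mono[of "Suc j" a] that off x by simp
  show ?thesis
  proof (cases "Suc a < A")
    case True
    have "x \<le> block (Suc j) - off - \<delta>/3" if "a < j" for j
      using block_gap[OF that] x(2)[OF True] off by simp
    then show ?thesis unfolding block_stairs_def
      using True below \<delta>_pos by (subst staircase_eq_count_plus_ramp) auto
  next
    case False
    then show ?thesis unfolding block_stairs_def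
      using a below \<delta>_pos by (subst staircase_eq_count[of _ a]) auto
  qed
qed

lemma block_count_nonneg: "0 \<le> block_count x"
  by (simp add: block_count_def block_stairs_def staircase_nonneg)

lemma bump_nonneg: "0 \<le> bump x"
  using staircase_antimono[of "\<delta>/3" "A - 1" "\<lambda>j. block (Suc j) - 2*\<delta>/3" "\<lambda>j. block (Suc j)"] \<delta>_pos
  by (simp add: bump_def block_stairs_def)

lemma cell_count_nonneg: "0 \<le> cell_count y"
  by (simp add: cell_count_def staircase_nonneg)

lemma local_coord_bump_in_block:
  assumes a: "a < A" and x: "block a \<le> x" "Suc a < A \<Longrightarrow> x \<le> block (Suc a) - 2*\<delta>/3"
  shows "local_coord x = x - block a"
    and "bump x = (if Suc a < A then ramp (block (Suc a) - 2*\<delta>/3) (\<delta>/3) x else 0)"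
proof -
  have x': "Suc a < A \<Longrightarrow> x \<le> block (Suc a) + 2*\<delta>" using x(2) \<delta>_pos by force
  have ramp0: "ramp (block (Suc a) - off) (\<delta>/3) x = 0" if "Suc a < A" "off \<le> \<delta>/3" for off
    using x(2)[OF that(1)] that(2) \<delta>_pos by (intro ramp_eq_0) auto
  have "block_count x = real a"
    using block_stairs_in_block[OF a _ _ x(1) x'] ramp0 \<delta>_pos by (simp add: block_count_def)
  then show "local_coord x = x - block a"
    by (simp add: local_coord_def block_def mult.commute)
  show "bump x = (if Suc a < A then ramp (block (Suc a) - 2*\<delta>/3) (\<delta>/3) x else 0)"
    using block_stairs_in_block[OF a _ _ x(1) x', of 0] ramp0[of 0]
      block_stairs_in_block[OF a _ _ x(1) x', of "2*\<delta>/3"] \<delta>_pos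
    by (simp add: bump_def)
qed

lemma psi_in_block:
  assumes "a < A" "block a \<le> x" "Suc a < A \<Longrightarrow> x \<le> block (Suc a) - 2*\<delta>/3"
  shows "psi x = x - clamp01 (K * (x - block a) - cell_count (x - block a)
      - (if Suc a < A then ramp (block (Suc a) - 2*\<delta>/3) (\<delta>/3) x else 0)) / K"
  using local_coord_bump_in_block[OF assms] by (simp add: psi_def)

lemma cell_count_in_cell:
  assumes i: "i < B" and y: "real i / K \<le> y" "Suc i < B \<Longrightarrow> y \<le> (real i + 1) / K - \<delta>"
  shows "cell_count y = real i"
  unfolding cell_count_def
proof (rule staircase_eq_count[OF \<delta>_pos])
  show "i \<le> B - 1" using i by simp
  show "real (Suc j) / K \<le> y" if "j < i" for j
  proof -
    have "real (Suc j) / K \<le> real i / K" using that K_pos by (simp add: divide_right_mono)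
    then show ?thesis using y(1) by simp
  qed
  show "y \<le> real (Suc j) / K - \<delta>" if "i \<le> j" "j < B - 1" for j
  proof -
    have "(real i + 1) / K \<le> real (Suc j) / K" using that K_pos by (simp add: divide_right_mono)
    moreover have "Suc i < B" using that by simp
    ultimately show ?thesis using y(2) by simp
  qed
qed

lemma sawtooth_le_1:
  assumes y: "y \<le> real B / K"
  shows "K * y - cell_count y \<le> 1"
proof (cases "y \<le> 0")
  case True
  then have "K * y \<le> 0" using K_pos by (simp add: mult_nonneg_nonpos)
  then show ?thesis using cell_count_nonneg[of y] by linarith
next
  case False
  define i where "i = min (nat \<lfloor>K * y\<rfloor>) (B - 1)"
  have "real (nat \<lfloor>K * y\<rfloor>) = real_of_int \<lfloor>K * y\<rfloor>" using False K_pos by simp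
  then have floor: "real (nat \<lfloor>K * y\<rfloor>) \<le> K * y" "K * y < real (nat \<lfloor>K * y\<rfloor>) + 1"
    by linarith+
  have "real i \<le> cell_count y" unfolding cell_count_def
  proof (rule staircase_ge_count[OF \<delta>_pos])
    show "i \<le> B - 1" by (simp add: i_def)
    show "real (Suc j) / K \<le> y" if "j < i" for j
    proof -
      have "real (Suc j) \<le> K * y" using that floor(1) by (simp add: i_def)
      then show ?thesis using K_pos by (simp add: divide_le_eq mult.commute)
    qed
  qed
  moreover have "K * y \<le> real i + 1"
  proof (cases "nat \<lfloor>K * y\<rfloor> \<le> B - 1")
    case True
    then show ?thesis using floor(2) by (simp add: i_def)
  next
    case False
    then have "real i + 1 = real B" using B_pos by (simp add: i_def)
    moreover have "K * y \<le> real B" using y K_pos by (simp add: le_divide_eq mult.commute)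
    ultimately show ?thesis by linarith
  qed
  ultimately show ?thesis by linarith
qed

lemma psi_eq_self_near_boundary:
  assumes a: "Suc a < A" and x: "block (Suc a) - 2*\<delta>/3 \<le> x" "x \<le> block (Suc a)"
  shows "psi x = x"
proof -
  have aA: "a < A" using a by simp
  have xa: "block a \<le> x" using x block_Suc[of a] three_\<delta>_le_cell cell_le_block_length by simp
  have x': "x \<le> block (Suc a) + 2*\<delta>" using x \<delta>_pos by simp
  note stairs = block_stairs_in_block[OF aA _ _ xa x']
  have "K * local_coord x - cell_count (local_coord x) - bump x \<le> 0"
  proof (cases "x \<le> block (Suc a) - \<delta>/3")
    case True
    have "bump x = 1"
      using stairs[of "2*\<delta>/3"] stairs[of 0] a x True \<delta>_pos by (simp add: bump_def ramp_eq_0 ramp_eq_1)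
    moreover have "real a \<le> block_count x"
      using stairs[of "\<delta>/3"] a \<delta>_pos by (simp add: block_count_def ramp_bounds)
    then have "real B / K * real a \<le> real B / K * block_count x"
      using K_pos by (intro mult_left_mono) auto
    then have "block a \<le> real B / K * block_count x" by (simp add: block_def mult.commute)
    then have "local_coord x \<le> real B / K"
      using x(2) block_Suc[of a] by (simp add: local_coord_def)
    ultimately show ?thesis using sawtooth_le_1[of "local_coord x"] by linarith
  next
    case False
    then have "block_count x = real (Suc a)"
      using stairs[of "\<delta>/3"] a \<delta>_pos by (simp add: block_count_def ramp_eq_1)
    then have "local_coord x \<le> 0" using x(2) by (simp add: local_coord_def block_def mult.commute)
    then have "K * local_coord x \<le> 0" using K_pos by (simp add: mult_nonneg_nonpos)
    then show ?thesis using cell_count_nonneg[of "local_coord x"] bump_nonneg[of x] by linarith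
  qed
  then show ?thesis by (simp add: psi_def clamp01_eq_0)
qed

lemma psi_range:
  assumes x: "0 \<le> x" "x \<le> 1"
  shows "psi x \<in> {0..1}"
proof -
  define T where "T = K * local_coord x - cell_count (local_coord x) - bump x"
  have "0 \<le> clamp01 T / K" using K_pos clamp01_bounds(1)[of T] by simp
  then have "x - clamp01 T / K \<le> 1" using x by linarith
  moreover have "0 \<le> x - clamp01 T / K"
  proof (cases "T \<le> 0")
    case True
    then show ?thesis using x by (simp add: clamp01_eq_0)
  next
    case False
    have "clamp01 T / K \<le> T / K" using False K_pos by (simp add: clamp01_le_self divide_right_mono)
    also have "T / K = x - real B / K * block_count x - (cell_count (local_coord x) + bump x) / K"
      using K_pos by (simp add: T_def local_coord_def field_simps)
    also have "\<dots> \<le> x"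
    proof -
      have "0 \<le> real B / K * block_count x" using K_pos block_count_nonneg[of x] by simp
      moreover have "0 \<le> (cell_count (local_coord x) + bump x) / K"
        using K_pos cell_count_nonneg[of "local_coord x"] bump_nonneg[of x] by simp
      ultimately show ?thesis by linarith
    qed
    finally show ?thesis by simp
  qed
  ultimately show ?thesis by (simp add: psi_def T_def)
qed

lemma psi_plateau:
  assumes k: "k < A * B"
    and x: "real k / K \<le> x" "x \<le> (real k + 1) / K - \<delta> * (if k < A * B - 1 then 1 else 0)"
  shows "psi x = real k / K"
proof -
  define a i where "a = k div B" and "i = k mod B"
  have k_eq: "k = a * B + i" and i: "i < B" and a: "a < A"
    using k B_pos by (auto simp: a_def i_def less_mult_imp_div_less)
  have k_real: "real k / K = block a + real i / K"
    and k1_real: "(real k + 1) / K = block a + (real i + 1) / K"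
    by (simp_all add: k_eq block_def add_divide_distrib)
  have x_le: "x \<le> (real k + 1) / K" using x(2) \<delta>_pos by (simp split: if_splits)
  have not_last: "x \<le> (real k + 1) / K - \<delta>" if "Suc a < A \<or> Suc i < B"
    using x(2) add_mult_less_pred_mult[OF i a that] by (simp add: k_eq)
  have x_block: "x \<le> block (Suc a) - \<delta>" if "Suc a < A"
  proof -
    have "real k + 1 \<le> real (Suc a) * real B" using k_eq i by (simp, simp add: algebra_simps)
    then have "(real k + 1) / K \<le> block (Suc a)" using K_pos by (simp add: block_def divide_right_mono)
    then show ?thesis using not_last that by simp
  qed
  have "0 \<le> real i / K" using K_pos by simp
  then have xa: "block a \<le> x" using x(1) k_real by linarith
  have "(if Suc a < A then ramp (block (Suc a) - 2*\<delta>/3) (\<delta>/3) x else 0) = 0"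
    using x_block \<delta>_pos by (simp add: ramp_eq_0)
  moreover have "Suc a < A \<Longrightarrow> x \<le> block (Suc a) - 2*\<delta>/3" using x_block \<delta>_pos by force
  ultimately have psi_x: "psi x = x - clamp01 (K * (x - block a) - cell_count (x - block a)) / K"
    using psi_in_block[OF a xa] by simp
  have "cell_count (x - block a) = real i"
    using not_last k_real k1_real x(1) by (intro cell_count_in_cell[OF i]) simp_all
  moreover have "real i \<le> K * (x - block a)" "K * (x - block a) \<le> real i + 1"
    using x(1) x_le k_real k1_real K_pos by (simp_all add: field_simps)
  ultimately show ?thesis
    using k_real K_pos by (simp add: psi_x clamp01_eq_self field_simps)
qed

lemma lipschitz_on_cell_count: "(1/\<delta>)-lipschitz_on UNIV cell_count"
  unfolding cell_count_def
proof (rule lipschitz_on_staircase[OF \<delta>_pos])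
  fix i j :: nat assume "i < j"
  then have "(real (Suc i) + 1) / K \<le> real (Suc j) / K" using K_pos by (simp add: divide_right_mono)
  then show "real (Suc i) / K \<le> real (Suc j) / K - \<delta>"
    using three_\<delta>_le_cell \<delta>_pos by (simp add: add_divide_distrib)
qed

lemma lipschitz_on_block_formula:
  assumes r: "(3/\<delta>)-lipschitz_on UNIV r"
  shows "(2 + 4 / (K * \<delta>))-lipschitz_on UNIV
    (\<lambda>x. x - clamp01 (K * (x - c) - cell_count (x - c) - r x) / K)"
proof -
  have "K-lipschitz_on UNIV (\<lambda>x. K * (x - c))"
    using K_pos by (intro lipschitz_onI) (auto simp: dist_real_def right_diff_distrib[symmetric] abs_mult)
  moreover have "(1/\<delta> * 1)-lipschitz_on UNIV (\<lambda>x. cell_count (x - c))"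
    by (rule lipschitz_on_compose2[OF _ lipschitz_on_subset[OF lipschitz_on_cell_count]])
      (auto intro!: lipschitz_onI simp: dist_real_def)
  ultimately have "(1 * (K + 1/\<delta> * 1 + 3/\<delta>))-lipschitz_on UNIV
      (\<lambda>x. clamp01 (K * (x - c) - cell_count (x - c) - r x))"
    using r by (intro lipschitz_on_compose2[OF _ lipschitz_on_clamp01] lipschitz_on_diff)
  then have "(1 + \<bar>1/K\<bar> * (1 * (K + 1/\<delta> * 1 + 3/\<delta>)))-lipschitz_on UNIV
      (\<lambda>x. x - 1/K * clamp01 (K * (x - c) - cell_count (x - c) - r x))"
    by (intro lipschitz_on_diff lipschitz_on_id lipschitz_on_cmult_real)
  moreover have "1 + \<bar>1/K\<bar> * (1 * (K + 1/\<delta> * 1 + 3/\<delta>)) = 2 + 4 / (K * \<delta>)"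
    using K_pos \<delta>_pos by (simp add: field_simps)
  ultimately show ?thesis by simp
qed

lemma lipschitz_on_psi_block:
  assumes a: "a < A"
  shows "(2 + 4 / (K * \<delta>))-lipschitz_on {block a .. block (Suc a)} psi"
proof -
  let ?C = "2 + 4 / (K * \<delta>)"
  have C: "1 \<le> ?C" using K_pos \<delta>_pos by simp
  define r where "r x = (if Suc a < A then ramp (block (Suc a) - 2*\<delta>/3) (\<delta>/3) x else 0)" for x
  define m where "m = (if Suc a < A then block (Suc a) - 2*\<delta>/3 else block (Suc a))"
  have "2*\<delta>/3 \<le> real B / K" using three_\<delta>_le_cell cell_le_block_length \<delta>_pos by linarith
  then have m: "block a \<le> m" "m \<le> block (Suc a)"
    using block_Suc[of a] block_mono[of a "Suc a"] \<delta>_pos by (auto simp: m_def)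
  have "(3/\<delta>)-lipschitz_on UNIV r"
    using lipschitz_on_ramp[of "\<delta>/3"] \<delta>_pos
    by (cases "Suc a < A") (auto simp: r_def[abs_def] intro: lipschitz_on_le[OF lipschitz_on_constant])
  then have "?C-lipschitz_on {block a .. m}
      (\<lambda>x. x - clamp01 (K * (x - block a) - cell_count (x - block a) - r x) / K)"
    by (rule lipschitz_on_subset[OF lipschitz_on_block_formula]) simp
  moreover have "psi x = x - clamp01 (K * (x - block a) - cell_count (x - block a) - r x) / K"
    if "x \<in> {block a .. m}" for x
    using psi_in_block[OF a] that by (auto simp: r_def m_def split: if_splits)
  ultimately have inner: "?C-lipschitz_on {block a .. m} psi"
    by (rule lipschitz_on_transform)
  have outer: "?C-lipschitz_on {m .. block (Suc a)} psi"
  proof (cases "Suc a < A")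
    case True
    have "?C-lipschitz_on {m .. block (Suc a)} (\<lambda>x. x)"
      using C by (intro lipschitz_on_le[OF lipschitz_on_id])
    then show ?thesis
      by (rule lipschitz_on_transform) (use True psi_eq_self_near_boundary in \<open>auto simp: m_def\<close>)
  next
    case False
    then show ?thesis using C by (simp add: m_def lipschitz_on_singleton)
  qed
  show ?thesis by (rule lipschitz_on_interval_concat[OF inner outer])
qed

lemma lipschitz_on_psi: "(2 + 4 / (K * \<delta>))-lipschitz_on {0..1} psi"
  using lipschitz_on_interval_chain[of _ A block psi] lipschitz_on_psi_block K_pos \<delta>_pos
  by (simp add: block_A)

lemma psi_clamp01_range: "psi (clamp01 t) \<in> {0..1}"
  using psi_range clamp01_bounds by simp

lemma lipschitz_on_psi_clamp01: "(2 + 4 / (K * \<delta>))-lipschitz_on UNIV (\<lambda>t. psi (clamp01 t))"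
  using lipschitz_on_compose2[OF lipschitz_on_clamp01 lipschitz_on_subset[OF lipschitz_on_psi]]
  by (simp add: clamp01_bounds image_subset_iff)

lemma psi_clamp01_plateau:
  assumes k: "k < A * B"
    and x: "real k / K \<le> x" "x \<le> (real k + 1) / K - \<delta> * (if k < A * B - 1 then 1 else 0)"
  shows "psi (clamp01 x) = real k / K"
proof -
  have "0 \<le> real k / K" using K_pos by simp
  moreover have "real k + 1 \<le> K" using k unfolding K_def by linarith
  then have "(real k + 1) / K \<le> 1" using K_pos by simp
  moreover have "0 \<le> \<delta> * (if k < A * B - 1 then 1 else 0)" using \<delta>_pos by simp
  ultimately have "clamp01 x = x" using x by (intro clamp01_eq_self) linarith+
  then show ?thesis using psi_plateau[OF assms] by simp
qed

end

section \<open>Register networks\<close>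

lemma sum_lessThan_add: "(\<Sum>j<m + (n::nat). f j) = (\<Sum>j<m. f j) + (\<Sum>j<n. f (m + j))"
  by (induction n) (simp_all add: add.assoc)

lemma affine_map_compose:
  assumes "\<And>q. q < p \<Longrightarrow> (\<Sum>j<n. N q j * h j) = v q"
  shows "affine_map n m (\<lambda>i j. \<Sum>q<p. M i q * N q j) b h = affine_map p m M b v"
proof -
  have row: "(\<Sum>j<n. (\<Sum>q<p. M i q * N q j) * h j) = (\<Sum>q<p. M i q * v q)" for i
  proof -
    have "(\<Sum>j<n. (\<Sum>q<p. M i q * N q j) * h j) = (\<Sum>q<p. M i q * (\<Sum>j<n. N q j * h j))"
      by (simp add: sum_distrib_right sum_distrib_left mult.assoc sum.swap[of _ "{..<n}"])
    then show ?thesis using assms by simp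
  qed
  show ?thesis unfolding affine_map_def by (rule ext) (simp only: row)
qed

lemma NN_scalar_mono:
  assumes "NN_scalar W L \<phi>" "W \<le> W'" "L \<le> L'"
  shows "NN_scalar W' L' \<phi>"
  using assms unfolding NN_scalar_def by (meson order.trans)

text \<open>
  A register network carries \<open>Q\<close> registers through its hidden layers by identity ReLU neurons,
  so a register is preserved only while it is nonnegative. In layer \<open>l\<close> it adds to register \<open>k\<close>
  the outputs of \<open>R\<close> clamp units \<open>clamp01 (preact l r V)\<close> with weights \<open>out l r k\<close>; each unit
  is realised by the two neurons \<open>max z 0\<close> and \<open>max (z - 1) 0\<close>.
\<close>

locale register_network =
  fixes Q R :: nat
    and wt :: "nat \<Rightarrow> nat \<Rightarrow> nat \<Rightarrow> real"
    and bias :: "nat \<Rightarrow> nat \<Rightarrow> real"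
    and out :: "nat \<Rightarrow> nat \<Rightarrow> nat \<Rightarrow> real"
begin

definition preact :: "nat \<Rightarrow> nat \<Rightarrow> (nat \<Rightarrow> real) \<Rightarrow> real" where
  "preact l r V = (\<Sum>q<Q. wt l r q * V q) + bias l r"

primrec state :: "real \<Rightarrow> nat \<Rightarrow> nat \<Rightarrow> real" where
  "state t 0 = (\<lambda>k. if k = 0 then t else 0)"
| "state t (Suc l) = (\<lambda>k. (if l = 0 then 0 else max (state t l k) 0)
      + (\<Sum>r<R. out l r k * clamp01 (preact l r (state t l))))"

definition hidden :: "nat \<Rightarrow> (nat \<Rightarrow> real) \<Rightarrow> nat \<Rightarrow> real" where
  "hidden l V i =
    (if i < Q then (if l = 0 then 0 else max (V i) 0)
     else if i < Q + 2 * R then max (preact l ((i - Q) div 2) V - real ((i - Q) mod 2)) 0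
     else 0)"

definition hidden_weight :: "nat \<Rightarrow> nat \<Rightarrow> nat \<Rightarrow> real" where
  "hidden_weight l i q =
    (if i < Q then (if l \<noteq> 0 \<and> q = i then 1 else 0) else wt l ((i - Q) div 2) q)"

definition hidden_bias :: "nat \<Rightarrow> nat \<Rightarrow> real" where
  "hidden_bias l i = (if i < Q then 0 else bias l ((i - Q) div 2) - real ((i - Q) mod 2))"

text \<open>\<open>readout l\<close> recovers the registers \<open>state t l\<close> from the vector entering affine layer \<open>l\<close>:
  the input for \<open>l = 0\<close>, and \<open>hidden (l - 1) (state t (l - 1))\<close> otherwise.\<close>

definition readout :: "nat \<Rightarrow> nat \<Rightarrow> nat \<Rightarrow> real" where
  "readout l q j = (if j = q then 1 else 0)
     + (if 0 < l \<and> Q \<le> j \<and> j < Q + 2 * R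
        then (-1) ^ ((j - Q) mod 2) * out (l - 1) ((j - Q) div 2) q else 0)"

definition layer :: "nat \<Rightarrow> nat \<Rightarrow> (nat \<Rightarrow> nat \<Rightarrow> real) \<times> (nat \<Rightarrow> real)" where
  "layer D l =
    (if l < D then ((\<lambda>i j. \<Sum>q<Q. hidden_weight l i q * readout l q j), hidden_bias l)
     else ((\<lambda>i j. readout D 0 j), (\<lambda>i. 0)))"

definition layer_dim :: "nat \<Rightarrow> nat \<Rightarrow> nat" where
  "layer_dim D l = (if 0 < l \<and> l \<le> D then Q + 2 * R else 1)"

lemma relu_hidden_preact:
  "relu_vec (affine_map Q (Q + 2 * R) (hidden_weight l) (hidden_bias l) V) = hidden l V"
proof
  fix i
  have "(\<Sum>q<Q. hidden_weight l i q * V q) = (if l = 0 then 0 else V i)" if "i < Q"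
    using that by (simp add: hidden_weight_def if_distrib[of "\<lambda>x. x * _"] sum.delta cong: if_cong)
  then show "relu_vec (affine_map Q (Q + 2 * R) (hidden_weight l) (hidden_bias l) V) i = hidden l V i"
    by (auto simp: relu_vec_def affine_map_def hidden_def hidden_weight_def hidden_bias_def preact_def
        algebra_simps)
qed

lemma readout_hidden:
  assumes q: "q < Q"
  shows "(\<Sum>j<Q + 2 * R. readout (Suc l) q j * hidden l V j)
    = (if l = 0 then 0 else max (V q) 0) + (\<Sum>r<R. out l r q * clamp01 (preact l r V))"
proof -
  have registers: "(\<Sum>j<Q. readout (Suc l) q j * hidden l V j) = (if l = 0 then 0 else max (V q) 0)"
    using q by (simp add: readout_def hidden_def if_distrib[of "\<lambda>x. x * _"] sum.delta cong: if_cong)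
  have unit: "(\<Sum>j\<in>{r * 2..<r * 2 + 2}. readout (Suc l) q (Q + j) * hidden l V (Q + j))
      = out l r q * clamp01 (preact l r V)" if "r < R" for r
  proof -
    have "{r * 2..<r * 2 + 2} = {2 * r, Suc (2 * r)}" by auto
    moreover have "Suc (2 * r) mod 2 = 1" "Suc (2 * r) div 2 = r" by presburger+
    ultimately show ?thesis using that q
      by (simp add: readout_def hidden_def relu_diff_eq_clamp01[symmetric] right_diff_distrib)
  qed
  have "(\<Sum>j<R * 2. readout (Suc l) q (Q + j) * hidden l V (Q + j))
      = (\<Sum>r<R. \<Sum>j\<in>{r * 2..<r * 2 + 2}. readout (Suc l) q (Q + j) * hidden l V (Q + j))"
    by (rule sum.nat_group[symmetric])
  also have "\<dots> = (\<Sum>r<R. out l r q * clamp01 (preact l r V))"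
    by (intro sum.cong refl unit) simp
  finally have "(\<Sum>j<R * 2. readout (Suc l) q (Q + j) * hidden l V (Q + j))
      = (\<Sum>r<R. out l r q * clamp01 (preact l r V))" .
  with registers show ?thesis by (simp add: sum_lessThan_add mult.commute[of 2])
qed

lemma net_eval_from_layer:
  assumes Q: "0 < Q" and D: "l \<le> D"
    and h: "\<And>q. q < Q \<Longrightarrow> (\<Sum>j<layer_dim D l. readout l q j * h j) = state t l q"
  shows "net_eval (map (layer_dim D) [l..<D+2]) (map (layer D) [l..<D+1]) h 0 = state t D 0"
  using D h
proof (induction "D - l" arbitrary: l h)
  case 0
  then have "l = D" by simp
  then show ?case using "0.prems"(2)[OF Q] by (simp add: upt_rec layer_def affine_map_def layer_dim_def)
next
  case (Suc d)
  then have l: "l < D" by simp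
  let ?V = "state t l"
  have dims: "[l..<D+2] = l # Suc l # [Suc (Suc l)..<D+2]" "[l..<D+1] = l # [Suc l..<D+1]"
    using l by (simp_all add: upt_rec)
  have "affine_map (layer_dim D l) (layer_dim D (Suc l))
      (\<lambda>i j. \<Sum>q<Q. hidden_weight l i q * readout l q j) (hidden_bias l) h
    = affine_map Q (Q + 2 * R) (hidden_weight l) (hidden_bias l) ?V"
    using l Suc.prems(2) by (simp add: affine_map_compose layer_dim_def)
  then have step: "net_eval (map (layer_dim D) [l..<D+2]) (map (layer D) [l..<D+1]) h
    = net_eval (map (layer_dim D) [Suc l..<D+2]) (map (layer D) [Suc l..<D+1]) (hidden l ?V)"
    using l by (simp add: dims layer_def relu_hidden_preact upt_conv_Cons del: upt_Suc)
  have "(\<Sum>j<layer_dim D (Suc l). readout (Suc l) q j * hidden l ?V j) = state t (Suc l) q"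
    if "q < Q" for q
    using l readout_hidden[OF that] by (simp add: layer_dim_def)
  from Suc.hyps(1)[OF _ _ this] have
    "net_eval (map (layer_dim D) [Suc l..<D+2]) (map (layer D) [Suc l..<D+1]) (hidden l ?V) 0
      = state t D 0"
    using Suc.hyps(2) l by simp
  with step show ?case by simp
qed

lemma NN_scalar_state:
  assumes "0 < Q" "1 \<le> D"
  shows "NN_scalar (Q + 2 * R) D (\<lambda>t. state t D 0)"
  unfolding NN_scalar_def
proof (intro exI conjI allI impI)
  let ?dims = "map (layer_dim D) [0..<D+2]" and ?layers = "map (layer D) [0..<D+1]"
  show "1 \<le> length ?layers" by simp
  show "length ?dims = length ?layers + 1" by simp
  show "length ?layers - 1 \<le> D" by simp
  show "hd ?dims = 1" by (simp add: upt_rec layer_dim_def)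
  show "last ?dims = 1" by (simp add: layer_dim_def last_map)
  show "?dims ! i \<le> Q + 2 * R" if "0 < i \<and> i < length ?layers" for i
    using that by (simp add: layer_dim_def nth_map del: upt_Suc)
  show "state t D 0 = net_eval ?dims ?layers (\<lambda>i. if i = 0 then t else 0) 0" for t
    by (rule net_eval_from_layer[symmetric]) (auto simp: assms layer_dim_def readout_def)
qed

lemma state_phase:
  fixes start N n target :: nat and it :: "nat \<Rightarrow> real"
  assumes start: "0 < start" and n: "n \<le> N * R"
    and out: "\<And>m r k. m < N \<Longrightarrow> r < R \<Longrightarrow>
      out (start + m) r k = (if k = target \<and> m * R + r < n then 1 else 0)"
    and unit: "\<And>m r V. m < N \<Longrightarrow> r < R \<Longrightarrow> m * R + r < n \<Longrightarrow>
      (\<And>k. k \<noteq> target \<Longrightarrow> V k = state t start k) \<Longrightarrow>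
      clamp01 (preact (start + m) r V) = it (m * R + r)"
    and it_nonneg: "\<And>g. 0 \<le> it g" and state_nonneg: "\<And>k. 0 \<le> state t start k"
  shows "state t (start + N) k = state t start k + (if k = target then \<Sum>g<n. it g else 0)"
proof -
  define f where "f g = (if g < n then it g else 0)" for g
  have "state t (start + m) k = state t start k + (if k = target then \<Sum>g<m * R. f g else 0)"
    if "m \<le> N" for m k
    using that
  proof (induction m arbitrary: k)
    case 0
    show ?case by simp
  next
    case (Suc m)
    let ?V = "state t (start + m)"
    have IH: "?V k = state t start k + (if k = target then \<Sum>g<m * R. f g else 0)" for k
      using Suc by simp
    have "0 \<le> ?V k"
      using IH state_nonneg it_nonneg by (simp add: f_def sum_nonneg)
    moreover have "(\<Sum>r<R. out (start + m) r k * clamp01 (preact (start + m) r ?V))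
        = (if k = target then \<Sum>r<R. f (m * R + r) else 0)"
      using Suc.prems IH by (auto simp: out unit f_def intro!: sum.cong)
    ultimately show ?case
      using start by (simp add: IH sum_lessThan_add add.commute[of R])
  qed
  from this[of N] show ?thesis using n by (simp add: f_def sum_lessThan_restrict)
qed

end

section \<open>A register program computing the staircase function\<close>

text \<open>
  Register 0 holds \<open>x = clamp01 t\<close>. Layers \<open>1, ..., 4 P\<close> form four phases of \<open>P\<close> layers; in
  phase \<open>p\<close>, unit \<open>r\<close> of the \<open>m\<close>-th layer evaluates ramp number \<open>m * R + r\<close> of the \<open>p\<close>-th staircase
  on \<open>phase_input p\<close> and adds it to register \<open>p + 1\<close>. The staircases are the block staircases
  at offsets \<open>\<delta>/3\<close>, \<open>2\<delta>/3\<close> and \<open>0\<close> (the block count and the two halves of the bump), then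
  the cell staircase of \<open>local_coord x = x - B / K * block_count x\<close>. Layer \<open>4 P + 1\<close> forms
  \<open>K * local_coord x - cell_count (local_coord x) - bump x\<close> from the registers (\<open>final_coeff\<close>)
  and subtracts its clamp divided by \<open>K\<close> from register 0.
\<close>

lemma sum_lessThan_five: "(\<Sum>q<(5::nat). f q) = f 0 + f 1 + f 2 + f 3 + f 4"
  by (simp add: eval_nat_numeral)

locale staircase_program = two_scale_staircase +
  fixes R P :: nat
  assumes R_pos: "1 \<le> R" and A_budget: "A - 1 \<le> P * R" and B_budget: "B - 1 \<le> P * R"
begin

definition phase_width :: "nat \<Rightarrow> real" where
  "phase_width p = (if p = 3 then \<delta> else \<delta>/3)"

definition phase_count :: "nat \<Rightarrow> nat" where
  "phase_count p = (if p = 3 then B - 1 else A - 1)"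

definition phase_threshold :: "nat \<Rightarrow> nat \<Rightarrow> real" where
  "phase_threshold p j =
    (if p = 0 then block (Suc j) - \<delta>/3 else if p = 1 then block (Suc j) - 2*\<delta>/3
     else if p = 2 then block (Suc j) else real (Suc j) / K)"

definition phase_coeff :: "nat \<Rightarrow> nat \<Rightarrow> real" where
  "phase_coeff p q = (if q = 0 then 1 else if p = 3 \<and> q = 1 then - real B / K else 0)"

definition final_coeff :: "nat \<Rightarrow> real" where
  "final_coeff q = [K, - real B, -1, 1, -1] ! q"

definition program_weight :: "nat \<Rightarrow> nat \<Rightarrow> nat \<Rightarrow> real" where
  "program_weight l r q =
    (if l = 0 then (if r = 0 \<and> q = 0 then 1 else 0)
     else if l \<le> 4 * P then phase_coeff ((l - 1) div P) q / phase_width ((l - 1) div P)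
     else if l = Suc (4 * P) \<and> r = 0 then final_coeff q else 0)"

definition program_bias :: "nat \<Rightarrow> nat \<Rightarrow> real" where
  "program_bias l r =
    (if 0 < l \<and> l \<le> 4 * P
     then 1 - phase_threshold ((l - 1) div P) ((l - 1) mod P * R + r) / phase_width ((l - 1) div P)
     else 0)"

definition program_out :: "nat \<Rightarrow> nat \<Rightarrow> nat \<Rightarrow> real" where
  "program_out l r k =
    (if l = 0 then (if r = 0 \<and> k = 0 then 1 else 0)
     else if l \<le> 4 * P then
       (if k = Suc ((l - 1) div P) \<and> (l - 1) mod P * R + r < phase_count ((l - 1) div P) then 1 else 0)
     else if l = Suc (4 * P) \<and> r = 0 \<and> k = 0 then - 1 / K else 0)"

sublocale net: register_network 5 R program_weight program_bias program_out .

definition phase_input :: "nat \<Rightarrow> (nat \<Rightarrow> real) \<Rightarrow> real" where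
  "phase_input p V = V 0 - (if p = 3 then real B / K * V 1 else 0)"

definition register_value :: "nat \<Rightarrow> real \<Rightarrow> real" where
  "register_value k x = [x, block_count x, block_stairs (2*\<delta>/3) x, block_stairs 0 x,
     cell_count (local_coord x)] ! k"

lemma phase_layer_index:
  assumes "p < 4" "m < P"
  shows "Suc (p * P + m) \<le> 4 * P" "(Suc (p * P + m) - 1) div P = p"
    "(Suc (p * P + m) - 1) mod P = m"
proof -
  have "p * P + m < Suc p * P" using assms(2) by simp
  also have "\<dots> \<le> 4 * P" using assms(1) by (intro mult_le_mono1) simp
  finally show "Suc (p * P + m) \<le> 4 * P" by simp
  show "(Suc (p * P + m) - 1) div P = p" "(Suc (p * P + m) - 1) mod P = m"
    using assms(2) by simp_all
qed

lemma clamp01_preact_phase: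
  assumes "p < 4" "m < P"
  shows "clamp01 (net.preact (Suc (p * P + m)) r V)
    = ramp (phase_threshold p (m * R + r)) (phase_width p) (phase_input p V)"
proof -
  have "phase_width p \<noteq> 0" using \<delta>_pos by (simp add: phase_width_def)
  moreover have "(\<Sum>q<5. phase_coeff p q * V q) = phase_input p V"
    by (simp add: phase_coeff_def phase_input_def eval_nat_numeral)
  then have "(\<Sum>q<5. phase_coeff p q / phase_width p * V q) = phase_input p V / phase_width p"
    by (simp add: sum_divide_distrib[symmetric])
  ultimately show ?thesis using phase_layer_index[OF assms]
    by (simp add: net.preact_def program_weight_def program_bias_def ramp_def diff_divide_distrib algebra_simps)
qed

lemma program_out_phase:
  assumes "p < 4" "m < P"
  shows "program_out (Suc (p * P + m)) r k = (if k = Suc p \<and> m * R + r < phase_count p then 1 else 0)"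
  using phase_layer_index[OF assms] by (simp add: program_out_def)

lemma phase_staircase:
  assumes "p < 4" "V 0 = x" "p = 3 \<Longrightarrow> V 1 = block_count x"
  shows "staircase (phase_threshold p) (phase_width p) (phase_count p) (phase_input p V)
    = register_value (Suc p) x"
  using assms
  by (auto simp: eval_nat_numeral less_Suc_eq phase_threshold_def[abs_def] phase_width_def
      phase_count_def phase_input_def register_value_def block_count_def block_stairs_def cell_count_def
      local_coord_def)

lemma register_value_nonneg: "0 \<le> x \<Longrightarrow> k < 5 \<Longrightarrow> 0 \<le> register_value k x"
  by (auto simp: register_value_def eval_nat_numeral less_Suc_eq block_count_nonneg cell_count_nonneg
      block_stairs_def staircase_nonneg)

lemma state_input_layer: "net.state t (Suc 0) k = (if k = 0 then clamp01 t else 0)"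
proof -
  have "net.state t (Suc 0) k = (\<Sum>r<R. program_out 0 r k * clamp01 (net.preact 0 r (net.state t 0)))"
    by simp
  also have "\<dots> = (\<Sum>r<R. if r = 0 then (if k = 0 then clamp01 t else 0) else 0)"
    by (intro sum.cong) (simp_all add: program_out_def program_weight_def program_bias_def
        net.preact_def if_distrib[of "\<lambda>x. x * _"] sum.delta cong: if_cong)
  finally show ?thesis using R_pos by simp
qed

lemma state_next_phase:
  assumes p: "p < 4" and nonneg: "\<And>k. 0 \<le> net.state t (Suc (p * P)) k"
  shows "net.state t (Suc (Suc p * P)) k = net.state t (Suc (p * P)) k
    + (if k = Suc p then staircase (phase_threshold p) (phase_width p) (phase_count p)
         (phase_input p (net.state t (Suc (p * P)))) else 0)"
proof -
  let ?V = "net.state t (Suc (p * P))"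
  have "net.state t (Suc (p * P) + P) k
      = ?V k + (if k = Suc p then \<Sum>g<phase_count p.
          ramp (phase_threshold p g) (phase_width p) (phase_input p ?V) else 0)"
  proof (rule net.state_phase)
    show "phase_count p \<le> P * R" using A_budget B_budget by (simp add: phase_count_def)
    show "program_out (Suc (p * P) + m) r k
        = (if k = Suc p \<and> m * R + r < phase_count p then 1 else 0)" if "m < P" for m r k
      using program_out_phase[OF p that] by simp
    show "clamp01 (net.preact (Suc (p * P) + m) r V)
        = ramp (phase_threshold p (m * R + r)) (phase_width p) (phase_input p ?V)"
      if "m < P" and agree: "\<And>k. k \<noteq> Suc p \<Longrightarrow> V k = ?V k" for m r V
    proof -
      have "phase_input p V = phase_input p ?V"
        using agree[of 0] agree[of 1] by (simp add: phase_input_def)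
      then show ?thesis using clamp01_preact_phase[OF p that(1)] by simp
    qed
    show "0 \<le> ?V k" for k by (rule nonneg)
  qed (simp_all add: ramp_bounds)
  then show ?thesis by (simp add: staircase_def add.commute[of P])
qed

lemma state_after_phases:
  assumes "p \<le> 4"
  shows "net.state t (Suc (p * P)) k = (if k \<le> p then register_value k (clamp01 t) else 0)"
  using assms
proof (induction p arbitrary: k)
  case 0
  show ?case by (simp only: mult_0 state_input_layer) (simp add: register_value_def)
next
  case (Suc p)
  then have p: "p < 4" by simp
  have IH: "net.state t (Suc (p * P)) k = (if k \<le> p then register_value k (clamp01 t) else 0)" for k
    using Suc by simp
  have "0 \<le> net.state t (Suc (p * P)) k" for k
    using IH p register_value_nonneg[of "clamp01 t" k] clamp01_bounds by simp
  then show ?case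
    using state_next_phase[OF p] phase_staircase[OF p] IH by (simp add: register_value_def)
qed

lemma state_output_layer:
  "net.state t (Suc (Suc (4 * P))) 0 = max (net.state t (Suc (4 * P)) 0) 0
    - clamp01 (\<Sum>q<5. final_coeff q * net.state t (Suc (4 * P)) q) / K"
proof -
  have "(\<Sum>r<R. program_out (Suc (4 * P)) r 0 * clamp01 (net.preact (Suc (4 * P)) r V))
      = (\<Sum>r<R. if r = 0 then - clamp01 (\<Sum>q<5. final_coeff q * V q) / K else 0)" for V
    by (intro sum.cong) (simp_all add: program_out_def program_weight_def program_bias_def net.preact_def)
  then show ?thesis using R_pos by (subst net.state.simps(2)) simp
qed

lemma state_output_eq_psi: "net.state t (Suc (Suc (4 * P))) 0 = psi (clamp01 t)"
proof -
  let ?X = "clamp01 t" and ?V = "net.state t (Suc (4 * P))"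
  have V: "?V k = (if k \<le> 4 then register_value k ?X else 0)" for k
    using state_after_phases[of 4] by simp
  have "(\<Sum>q<5. final_coeff q * ?V q)
      = K * ?X - real B * block_count ?X - block_stairs (2*\<delta>/3) ?X + block_stairs 0 ?X
        - cell_count (local_coord ?X)"
    by (simp only: sum_lessThan_five V) (simp add: final_coeff_def register_value_def)
  also have "\<dots> = K * local_coord ?X - cell_count (local_coord ?X) - bump ?X"
    using K_pos by (simp add: local_coord_def bump_def algebra_simps)
  finally show ?thesis
    using V[of 0] clamp01_bounds(1)[of t]
    by (simp only: state_output_layer) (simp add: psi_def register_value_def)
qed

theorem NN_scalar_psi_clamp01:
  "NN_scalar (5 + 2 * R) (Suc (Suc (4 * P))) (\<lambda>t. psi (clamp01 t))"
  using net.NN_scalar_state[of "Suc (Suc (4 * P))"] unfolding state_output_eq_psi by simp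

end

lemma K_of_factorization:
  assumes "1 \<le> W" "1 \<le> L" "1 \<le> d"
  obtains A B where "K_of W L d = A * B" "1 \<le> A" "1 \<le> B" "A \<le> W * L" "B \<le> W * L"
proof (cases "d = 1")
  case True
  have "real (W * L) powr (2 / real d) = real (W * L) ^ 2" using True by simp
  then have "real (W * L) powr (2 / real d) = real ((W * L) * (W * L))"
    by (simp add: power2_eq_square)
  then have "K_of W L d = (W * L) * (W * L)"
    unfolding K_of_def by (simp only: floor_of_nat nat_int)
  then show ?thesis using that assms by simp
next
  case False
  define N where "N = real (W * L)"
  have "1 \<le> W * L" using assms by simp
  then have N: "1 \<le> N" unfolding N_def by linarith
  have exponent: "0 \<le> 2 / real d" "2 / real d \<le> 1" using assms False by simp_all
  have "1 \<le> N powr (2 / real d)" using ge_one_powr_ge_zero[OF N exponent(1)] .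
  moreover have "N powr (2 / real d) \<le> N" using powr_mono[OF exponent(2) N] N by simp
  ultimately have "1 \<le> K_of W L d" "K_of W L d \<le> W * L"
    unfolding K_of_def N_def[symmetric] by (linarith, simp add: N_def nat_le_iff floor_le_iff)
  then show ?thesis using that[of 1 "K_of W L d"] assms by simp
qed

lemma ramp_count_le_budget:
  fixes W L A :: nat
  assumes "1 \<le> W" "2 \<le> L" "A \<le> W * L"
  shows "A - 1 \<le> (L - 1) * (2 * W - 1)"
proof -
  have "1 \<le> W * L" using assms by simp
  then have "int (W * L - 1) = int W * int L - 1" by (simp add: of_nat_diff)
  also have "\<dots> \<le> (int L - 1) * (2 * int W - 1)"
    using mult_nonneg_nonneg[of "int W - 1" "int L - 2"] assms by (simp add: algebra_simps)
  also have "\<dots> = int ((L - 1) * (2 * W - 1))" using assms by (simp add: of_nat_diff)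
  finally have "W * L - 1 \<le> (L - 1) * (2 * W - 1)" by (simp only: of_nat_le_iff)
  then show ?thesis using assms(3) by simp
qed

lemma lipschitz_constant_bound:
  fixes u :: real and L :: nat
  assumes "0 < u" "u \<le> 1/3" "2 \<le> L"
  shows "2 + 4 / u \<le> 2 * real L / u\<^sup>2"
proof -
  have "u * u \<le> u * (1/3)" using assms by (intro mult_left_mono) auto
  then have "2 * u\<^sup>2 + 4 * u \<le> 2 * real L" using assms unfolding power2_eq_square by linarith
  moreover have "(2 + 4 / u) * u\<^sup>2 = 2 * u\<^sup>2 + 4 * u"
    using assms by (simp add: field_simps power2_eq_square)
  ultimately have "(2 + 4 / u) * u\<^sup>2 \<le> 2 * real L" by simp
  then show ?thesis using assms by (simp add: pos_le_divide_eq)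
qed

theorem proposition28:
  fixes W L d :: nat and \<delta> :: real
  assumes "W \<ge> 6" and "L \<ge> 2" and "d \<ge> 1"
    and "0 < \<delta>" and "\<delta> \<le> 1 / (3 * real (K_of W L d))"
  shows "\<exists>\<phi>. NN_scalar (4 * W + 3) (4 * L) \<phi> \<and>
           (\<forall>x. \<phi> x \<in> {0..1}) \<and>
           (2 * real L / ((real (K_of W L d))\<^sup>2 * \<delta>\<^sup>2))-lipschitz_on UNIV \<phi> \<and>
           (\<forall>k < K_of W L d. \<forall>x.
              real k / real (K_of W L d) \<le> x \<and>
              x \<le> (real k + 1) / real (K_of W L d)
                    - \<delta> * (if k < K_of W L d - 1 then 1 else 0)
              \<longrightarrow> \<phi> x = real k / real (K_of W L d))"
proof -
  have "1 \<le> W" "1 \<le> L" using assms(1,2) by simp_all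
  then obtain A B where KAB: "K_of W L d = A * B"
    and A: "1 \<le> A" "A \<le> W * L" and B: "1 \<le> B" "B \<le> W * L"
    using K_of_factorization assms(3) by metis
  have "3 * real (A * B) * \<delta> \<le> 1"
    using assms(5) A(1) B(1) unfolding KAB by (simp add: field_simps)
  then interpret staircase_program A B \<delta> "2 * W - 1" "L - 1"
    using A B assms(1,2,4) ramp_count_le_budget[of W L] by unfold_locales auto
  have K: "K = real (K_of W L d)" by (simp add: K_def KAB)
  have "NN_scalar (4 * W + 3) (4 * L) (\<lambda>t. psi (clamp01 t))"
    using assms(1,2) by (intro NN_scalar_mono[OF NN_scalar_psi_clamp01]) auto
  moreover have "2 + 4 / (K * \<delta>) \<le> 2 * real L / (K\<^sup>2 * \<delta>\<^sup>2)"
    using lipschitz_constant_bound[of "K * \<delta>" L] K_pos three_\<delta>_le_cell assms(2,4)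
    by (simp add: power_mult_distrib field_simps)
  ultimately show ?thesis
    using psi_clamp01_range lipschitz_on_le[OF lipschitz_on_psi_clamp01] psi_clamp01_plateau
    unfolding K KAB by blast
qed

end
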